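(* For every integer $k\ge 2$ and every $n\ge 0$, the number of edges of the $k$-Pell graph $\Pi_{n,k}$ is $$|E(\Pi_{n,k})|=\sum_{i=0}^{n}F_{i,k}\left(F_{n-i+2,k}-F_{n-i+1,k}\right).$$
   Context: For a positive integer $k$, the $k$-Fibonacci numbers are defined by $F_{0,k}=0$, $F_{1,k}=1$ and $F_{n,k}=kF_{n-1,k}+F_{n-2,k}$ for $n\ge 2$. For an integer $k\ge 2$, a $k$-Pell string is a finite word over the alphabet $\{0,1,\ldots,k-1,kk\}$, i.e. a word over $\{0,1,\ldots,k\}$ in which every maximal run of the letter $k$ has even length. For $n\ge 0$, the $k$-Pell graph $\Pi_{n,k}$ has as vertices all $k$-Pell strings of length $n$, and two vertices are adjacent if one is obtained from the other either by replacing a single letter $i$ by $i+1$ (or vice versa) for some $i\in\{0,1,\ldots,k-2\}$, or by replacing one factor $(k-1)(k-1)$ by $kk$ (or vice versa), in such a way that the resulting string is again a $k$-Pell string. *)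

theory Defs
  imports Main
begin

fun kfib :: "nat \<Rightarrow> nat \<Rightarrow> nat" where
  "kfib k 0 = 0"
| "kfib k (Suc 0) = 1"
| "kfib k (Suc (Suc n)) = k * kfib k (Suc n) + kfib k n"

text \<open>k-Pell strings: words over the alphabet 0,1,...,k-1 and the double letter kk,
  represented as lists of naturals over 0..k.\<close>
fun pell_string :: "nat \<Rightarrow> nat list \<Rightarrow> bool" where
  "pell_string k [] = True"
| "pell_string k [a] = (a < k)"
| "pell_string k (a # b # w) =
     (if a < k then pell_string k (b # w)
      else a = k \<and> b = k \<and> pell_string k w)"

definition pell_vertices :: "nat \<Rightarrow> nat \<Rightarrow> nat list set" where
  "pell_vertices n k = {w. length w = n \<and> pell_string k w}"

definition pell_step :: "nat \<Rightarrow> nat list \<Rightarrow> nat list \<Rightarrow> bool" where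
  "pell_step k u v \<longleftrightarrow>
     (\<exists>x a y. u = x @ [a] @ y \<and> v = x @ [Suc a] @ y \<and> a \<le> k - 2)
   \<or> (\<exists>x y. u = x @ [k - 1, k - 1] @ y \<and> v = x @ [k, k] @ y)"

definition pell_edges :: "nat \<Rightarrow> nat \<Rightarrow> nat list set set" where
  "pell_edges n k = {{u, v} | u v. u \<in> pell_vertices n k \<and> v \<in> pell_vertices n k
                                   \<and> pell_step k u v}"

end

theory Submission
  imports Defs
begin

text \<open>Orienting every edge towards the endpoint with the larger letter sum turns edges into
  arcs. Splitting off the first letter, or the first block kk, of a string gives
  \<open>V(n+2) = k V(n+1) + V(n)\<close> for the vertex counts, hence \<open>V(n) = F(n+1)\<close>, and
  \<open>A(n+2) = k A(n+1) + A(n) + g(n+1)\<close> for the arc counts, where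
  \<open>g(m) = (k-1) F(m+1) + F(m) = F(m+2) - F(m+1)\<close> counts the arcs on strings of length m+1
  that change the first letter or block. The convolution \<open>\<Sum>i. F(i) g(n-i)\<close> obeys the same
  recurrence, because \<open>F\<close> does, and has the same initial values.\<close>

fun pell_move :: "nat \<Rightarrow> nat list \<Rightarrow> nat list \<Rightarrow> bool" where
  "pell_move k (a # u) (b # v) \<longleftrightarrow>
     a = b \<and> pell_move k u v
   \<or> b = Suc a \<and> a \<le> k - 2 \<and> u = v
   \<or> a = k - 1 \<and> b = k \<and> (\<exists>w. u = (k - 1) # w \<and> v = k # w)"
| "pell_move k _ _ \<longleftrightarrow> False"

lemma pell_move_append_left: "pell_move k v w \<Longrightarrow> pell_move k (u @ v) (u @ w)"
  by (induction u) auto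

lemma pell_step_Cons: "pell_step k u v \<Longrightarrow> pell_step k (a # u) (a # v)"
  unfolding pell_step_def by (metis append_Cons)

lemma pell_step_iff_pell_move: "pell_step k u v \<longleftrightarrow> pell_move k u v"
proof
  assume "pell_step k u v"
  then show "pell_move k u v"
    unfolding pell_step_def by (auto intro: pell_move_append_left)
next
  assume "pell_move k u v"
  then show "pell_step k u v"
  proof (induction k u v rule: pell_move.induct)
    case (1 k a u b v)
    from "1.prems" consider "a = b" "pell_move k u v" | "b = Suc a" "a \<le> k - 2" "u = v"
      | w where "a = k - 1" "b = k" "u = (k - 1) # w" "v = k # w"
      by auto
    then show ?case
    proof cases
      case 1
      with "1.IH" show ?thesis by (simp add: pell_step_Cons)
    qed (unfold pell_step_def; metis append.simps)+
  qed auto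
qed

lemma pell_move_sum_list_less: "1 \<le> k \<Longrightarrow> pell_move k u v \<Longrightarrow> sum_list u < sum_list v"
  by (induction k u v rule: pell_move.induct) auto

lemma card_doubleton_image:
  fixes f :: "'a \<Rightarrow> 'b::order"
  assumes "\<And>u v. (u, v) \<in> A \<Longrightarrow> f u < f v"
  shows "card ((\<lambda>(u, v). {u, v}) ` A) = card A"
proof (rule card_image, rule inj_onI, clarify)
  fix u v u' v' assume "(u, v) \<in> A" "(u', v') \<in> A" "{u, v} = {u', v'}"
  with assms[of u v] assms[of u' v'] show "u = u' \<and> v = v'"
    by (auto simp: doubleton_eq_iff)
qed

definition pell_arcs :: "nat \<Rightarrow> nat \<Rightarrow> (nat list \<times> nat list) set" where
  "pell_arcs n k = {(u, v). u \<in> pell_vertices n k \<and> v \<in> pell_vertices n k \<and> pell_move k u v}"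

lemma pell_edges_eq_image_pell_arcs:
  "pell_edges n k = (\<lambda>(u, v). {u, v}) ` pell_arcs n k"
  unfolding pell_edges_def pell_arcs_def pell_step_iff_pell_move by auto

lemma card_pell_edges_eq_card_pell_arcs: "1 \<le> k \<Longrightarrow> card (pell_edges n k) = card (pell_arcs n k)"
  unfolding pell_edges_eq_image_pell_arcs
  by (rule card_doubleton_image[where f = sum_list])
     (auto simp: pell_arcs_def pell_move_sum_list_less)

lemma pell_string_imp_set_subset: "pell_string k w \<Longrightarrow> set w \<subseteq> {..k}"
  by (induction k w rule: pell_string.induct) (auto split: if_splits)

lemma finite_pell_vertices: "finite (pell_vertices n k)"
proof (rule finite_subset)
  show "pell_vertices n k \<subseteq> {w. set w \<subseteq> {..k} \<and> length w = n}"
    by (auto simp: pell_vertices_def dest: pell_string_imp_set_subset)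
qed (simp add: finite_lists_length_eq)

lemma finite_pell_arcs: "finite (pell_arcs n k)"
  by (rule finite_subset[of _ "pell_vertices n k \<times> pell_vertices n k"])
     (auto simp: pell_arcs_def finite_pell_vertices)

lemma pell_string_Cons: "a < k \<Longrightarrow> pell_string k (a # w) \<longleftrightarrow> pell_string k w"
  by (cases w) auto

lemma pell_string_Cons_not_less:
  "pell_string k (a # w) \<Longrightarrow> \<not> a < k \<Longrightarrow> a = k \<and> (\<exists>w'. w = k # w' \<and> pell_string k w')"
  by (cases w) (auto split: if_splits)

lemma pell_vertices_0: "pell_vertices 0 k = {[]}"
  by (auto simp: pell_vertices_def)

lemma pell_vertices_1: "pell_vertices (Suc 0) k = (\<lambda>a. [a]) ` {..<k}"
  by (auto simp: pell_vertices_def length_Suc_conv)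

lemma pell_vertices_Suc_Suc:
  "pell_vertices (Suc (Suc n)) k =
     (\<lambda>(a, w). a # w) ` ({..<k} \<times> pell_vertices (Suc n) k) \<union> (\<lambda>w. k # k # w) ` pell_vertices n k"
  by (auto simp: pell_vertices_def length_Suc_conv pell_string_Cons split: if_splits)

lemma card_pell_vertices: "card (pell_vertices n k) = kfib k (Suc n)"
proof (induction k n rule: kfib.induct)
  case (3 k n)
  have "card (pell_vertices (Suc (Suc n)) k) =
      k * card (pell_vertices (Suc n) k) + card (pell_vertices n k)"
    unfolding pell_vertices_Suc_Suc
    by (subst card_Un_disjoint) (auto simp: finite_pell_vertices card_image inj_on_def card_cartesian_product)
  with 3 show ?case by simp
qed (auto simp: pell_vertices_0 pell_vertices_1 card_image inj_on_def)

lemma pell_arcs_0: "pell_arcs 0 k = {}"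
  by (auto simp: pell_arcs_def pell_vertices_def)

lemma pell_arcs_1: "2 \<le> k \<Longrightarrow> pell_arcs (Suc 0) k = (\<lambda>a. ([a], [Suc a])) ` {..<k - 1}"
  by (auto simp: pell_arcs_def pell_vertices_def length_Suc_conv)

lemma pell_arcs_Suc_Suc:
  assumes "2 \<le> k"
  shows "pell_arcs (Suc (Suc n)) k =
     (\<lambda>(a, u, v). (a # u, a # v)) ` ({..<k} \<times> pell_arcs (Suc n) k)
   \<union> (\<lambda>(u, v). (k # k # u, k # k # v)) ` pell_arcs n k
   \<union> (\<lambda>(a, w). (a # w, Suc a # w)) ` ({..<k - 1} \<times> pell_vertices (Suc n) k)
   \<union> (\<lambda>w. ((k - 1) # (k - 1) # w, k # k # w)) ` pell_vertices n k"
    (is "_ = ?keep_letter \<union> ?keep_block \<union> ?raise_letter \<union> ?raise_block")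
proof (rule equalityI)
  show "pell_arcs (Suc (Suc n)) k \<subseteq> ?keep_letter \<union> ?keep_block \<union> ?raise_letter \<union> ?raise_block"
  proof (rule subrelI)
    fix u v assume "(u, v) \<in> pell_arcs (Suc (Suc n)) k"
    then obtain a u' c v' where uv: "u = a # u'" "v = c # v'" "length u' = Suc n" "length v' = Suc n"
      "pell_string k (a # u')" "pell_string k (c # v')" "pell_move k (a # u') (c # v')"
      by (auto simp: pell_arcs_def pell_vertices_def length_Suc_conv)
    then consider "a = c" "pell_move k u' v'" | "c = Suc a" "a \<le> k - 2" "u' = v'"
      | w where "a = k - 1" "c = k" "u' = (k - 1) # w" "v' = k # w"
      by auto
    then show "(u, v) \<in> ?keep_letter \<union> ?keep_block \<union> ?raise_letter \<union> ?raise_block"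
    proof cases
      case 1
      show ?thesis
      proof (cases "a < k")
        case True
        with 1 uv have "(a, u', v') \<in> {..<k} \<times> pell_arcs (Suc n) k"
          by (simp add: pell_arcs_def pell_vertices_def pell_string_Cons)
        then have "(u, v) \<in> ?keep_letter"
          using uv 1 by (auto intro: rev_image_eqI)
        then show ?thesis by blast
      next
        case False
        with 1 uv obtain w w' where "a = k" "u' = k # w" "v' = k # w'" "pell_string k w" "pell_string k w'"
          by (metis pell_string_Cons_not_less)
        with 1 uv assms have "(w, w') \<in> pell_arcs n k"
          by (auto simp: pell_arcs_def pell_vertices_def)
        then have "(u, v) \<in> ?keep_block"
          using uv 1 \<open>a = k\<close> \<open>u' = k # w\<close> \<open>v' = k # w'\<close> by (auto intro: rev_image_eqI)
        then show ?thesis by blast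
      qed
    next
      case 2
      with uv assms have "(a, u') \<in> {..<k - 1} \<times> pell_vertices (Suc n) k"
        by (simp add: pell_vertices_def pell_string_Cons)
      then have "(u, v) \<in> ?raise_letter"
        using uv 2 by (auto intro: rev_image_eqI)
      then show ?thesis by blast
    next
      case 3
      with uv assms have "w \<in> pell_vertices n k"
        by (simp add: pell_vertices_def pell_string_Cons)
      then have "(u, v) \<in> ?raise_block"
        using uv 3 by (auto intro: rev_image_eqI)
      then show ?thesis by blast
    qed
  qed
  show "?keep_letter \<union> ?keep_block \<union> ?raise_letter \<union> ?raise_block \<subseteq> pell_arcs (Suc (Suc n)) k"
    using assms by (auto simp: pell_arcs_def pell_vertices_def pell_string_Cons)
qed

lemma card_pell_arcs_Suc_Suc:
  assumes "2 \<le> k"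
  shows "card (pell_arcs (Suc (Suc n)) k) =
     k * card (pell_arcs (Suc n) k) + card (pell_arcs n k)
     + ((k - 1) * kfib k (Suc (Suc n)) + kfib k (Suc n))"
proof -
  have inj: "inj_on (\<lambda>(a, u, v). (a # u, a # v)) A" "inj_on (\<lambda>(u, v). (c # c # u, c # c # v)) B"
    "inj_on (\<lambda>(a, w). (a # w, Suc a # w)) C" "inj_on (\<lambda>w. (c # c # w, d # d # w)) D"
    for A B C D and c d :: nat
    by (auto simp: inj_on_def)
  show ?thesis
    unfolding pell_arcs_Suc_Suc[OF assms] using assms
    by (subst card_Un_disjoint; (subst card_Un_disjoint)?; (subst card_Un_disjoint)?)
       (auto simp: finite_pell_arcs finite_pell_vertices card_image[OF inj(1)]
         card_image[OF inj(2)] card_image[OF inj(3)] card_image[OF inj(4)]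
         card_cartesian_product card_pell_vertices)
qed

lemma kfib_convolution_Suc_Suc:
  "(\<Sum>i = 0..Suc (Suc n). kfib k i * g (Suc (Suc n) - i)) =
     k * (\<Sum>i = 0..Suc n. kfib k i * g (Suc n - i)) + (\<Sum>i = 0..n. kfib k i * g (n - i)) + g (Suc n)"
proof -
  have "(\<Sum>i = 0..Suc (Suc n). kfib k i * g (Suc (Suc n) - i)) =
      (\<Sum>i = 0..n. kfib k (Suc (Suc i)) * g (n - i)) + g (Suc n)"
    unfolding sum.atLeast0_atMost_Suc_shift by simp
  also have "\<dots> = k * (\<Sum>i = 0..n. kfib k (Suc i) * g (n - i)) + (\<Sum>i = 0..n. kfib k i * g (n - i)) + g (Suc n)"
    by (simp add: sum.distrib sum_distrib_left algebra_simps)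
  also have "(\<Sum>i = 0..n. kfib k (Suc i) * g (n - i)) = (\<Sum>i = 0..Suc n. kfib k i * g (Suc n - i))"
    unfolding sum.atLeast0_atMost_Suc_shift by simp
  finally show ?thesis .
qed

lemma card_pell_arcs:
  assumes "2 \<le> k"
  shows "card (pell_arcs n k) = (\<Sum>i = 0..n. kfib k i * ((k - 1) * kfib k (Suc (n - i)) + kfib k (n - i)))"
  using assms
proof (induction k n rule: kfib.induct)
  case (2 k)
  then show ?case by (simp add: pell_arcs_1 card_image inj_on_def)
next
  case (3 k n)
  then show ?case
    using kfib_convolution_Suc_Suc[where g = "\<lambda>m. (k - 1) * kfib k (Suc m) + kfib k m"]
    by (simp add: card_pell_arcs_Suc_Suc)
qed (simp add: pell_arcs_0)

lemma kfib_Suc_Suc_minus_Suc: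
  "1 \<le> k \<Longrightarrow> kfib k (Suc (Suc m)) - kfib k (Suc m) = (k - 1) * kfib k (Suc m) + kfib k m"
  by (cases k) auto

theorem proposition3p2:
  fixes k n :: nat
  assumes "k \<ge> 2"
  shows "card (pell_edges n k) =
           (\<Sum>i = 0..n. kfib k i * (kfib k (n - i + 2) - kfib k (n - i + 1)))"
proof -
  have "card (pell_edges n k) = card (pell_arcs n k)"
    using assms by (simp add: card_pell_edges_eq_card_pell_arcs)
  also have "\<dots> = (\<Sum>i = 0..n. kfib k i * ((k - 1) * kfib k (Suc (n - i)) + kfib k (n - i)))"
    using assms by (rule card_pell_arcs)
  also have "\<dots> = (\<Sum>i = 0..n. kfib k i * (kfib k (n - i + 2) - kfib k (n - i + 1)))"
    using assms kfib_Suc_Suc_minus_Suc[of k] by simp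
  finally show ?thesis .
qed

end
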